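(* Let $C_0(\mathbb{G})$ be the algebra of continuous complex-valued functions on $\mathbb{G}$ vanishing at infinity. Every closed ideal $I$ of $C_0(\mathbb{G})$ that is $\mathrm{Aut}(\mathbb{G})$-invariant (i.e. $f\circ H_\varphi\in I$ whenever $f\in I$ and $\varphi\in\mathrm{Aut}(\mathbb{D})$) can be written as $I(E)=\{f\in C_0(\mathbb{G}): f|_E\equiv0\}$, where $E=q^{-1}(\Lambda)$ for some closed subset $\Lambda$ of $[0,1)$.
   Context: $\mathbb{D}$ is the open unit disc and $\mathrm{Aut}(\mathbb{D})$ its holomorphic automorphism group. $\mathbb{G}=\{(z_1+z_2,z_1z_2):z_1,z_2\in\mathbb{D}\}$; $\mathrm{Aut}(\mathbb{G})=\{H_\varphi:\varphi\in\mathrm{Aut}(\mathbb{D})\}$ with $H_\varphi(z_1+z_2,z_1z_2)=(\varphi(z_1)+\varphi(z_2),\varphi(z_1)\varphi(z_2))$. The map $q:\mathbb{G}\to[0,1)$ is $q(z_1+z_2,z_1z_2)=\left|\frac{z_1-z_2}{1-\overline{z_1}z_2}\right|$. *)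

theory Defs
  imports "HOL-Complex_Analysis.Complex_Analysis"
begin

definition unit_disc :: "complex set" where
  "unit_disc = ball 0 1"

definition symbidisc :: "(complex \<times> complex) set" where
  "symbidisc = {(z1 + z2, z1 * z2) | z1 z2. z1 \<in> unit_disc \<and> z2 \<in> unit_disc}"

definition AutD :: "(complex \<Rightarrow> complex) set" where
  "AutD = {\<phi>. \<phi> holomorphic_on unit_disc \<and> bij_betw \<phi> unit_disc unit_disc}"

definition Hmap :: "(complex \<Rightarrow> complex) \<Rightarrow> complex \<times> complex \<Rightarrow> complex \<times> complex" where
  "Hmap \<phi> p = (SOME w. \<exists>z1 z2. z1 \<in> unit_disc \<and> z2 \<in> unit_disc \<and>
      p = (z1 + z2, z1 * z2) \<and> w = (\<phi> z1 + \<phi> z2, \<phi> z1 * \<phi> z2))"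

definition qmap :: "complex \<times> complex \<Rightarrow> real" where
  "qmap p = (SOME r. \<exists>z1 z2. z1 \<in> unit_disc \<and> z2 \<in> unit_disc \<and>
      p = (z1 + z2, z1 * z2) \<and> r = norm ((z1 - z2) / (1 - cnj z1 * z2)))"

text \<open>C_0(G): continuous functions on G vanishing at infinity; functions are
  normalised to be 0 outside G so that each element of C_0(G) has a unique representative.\<close>
definition C0G :: "(complex \<times> complex \<Rightarrow> complex) set" where
  "C0G = {f. continuous_on symbidisc f
            \<and> (\<forall>\<epsilon>>0. compact {p \<in> symbidisc. norm (f p) \<ge> \<epsilon>})
            \<and> (\<forall>p. p \<notin> symbidisc \<longrightarrow> f p = 0)}"

definition is_ideal_C0G :: "(complex \<times> complex \<Rightarrow> complex) set \<Rightarrow> bool" where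
  "is_ideal_C0G I \<longleftrightarrow> I \<subseteq> C0G \<and> (\<lambda>_. 0) \<in> I
     \<and> (\<forall>f\<in>I. \<forall>g\<in>I. (\<lambda>p. f p + g p) \<in> I)
     \<and> (\<forall>f\<in>I. \<forall>c. (\<lambda>p. c * f p) \<in> I)
     \<and> (\<forall>f\<in>I. \<forall>h\<in>C0G. (\<lambda>p. h p * f p) \<in> I)"

definition closed_C0G :: "(complex \<times> complex \<Rightarrow> complex) set \<Rightarrow> bool" where
  "closed_C0G I \<longleftrightarrow> (\<forall>f\<in>C0G. (\<forall>\<epsilon>>0. \<exists>g\<in>I. \<forall>p\<in>symbidisc. norm (f p - g p) \<le> \<epsilon>)
                        \<longrightarrow> f \<in> I)"

definition aut_invariant :: "(complex \<times> complex \<Rightarrow> complex) set \<Rightarrow> bool" where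
  "aut_invariant I \<longleftrightarrow> (\<forall>f\<in>I. \<forall>\<phi>\<in>AutD.
      (\<lambda>p. if p \<in> symbidisc then f (Hmap \<phi> p) else 0) \<in> I)"

definition ideal_of :: "(complex \<times> complex) set \<Rightarrow> (complex \<times> complex \<Rightarrow> complex) set" where
  "ideal_of E = {f \<in> C0G. \<forall>p\<in>E. f p = 0}"

end

theory Submission
  imports Defs
begin

(* A closed ideal I of C_0(G) consists of all functions vanishing on its hull E, the common zero
   set of I: if f vanishes on E, then on the compact set K where |f| \<ge> \<epsilon> finitely many g \<in> I
   have no common zero, so h = \<Sum> |g|^2 \<in> I is bounded below on K and f h / (\<delta> + h) \<in> I is
   uniformly \<epsilon>-close to f.
   If I is Aut(G)-invariant, so is E. The Moebius automorphism sending z1 to 0, rotated so that z2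
   goes to the positive real number q(z1 + z2, z1 z2), moves (z1 + z2, z1 z2) to (q, 0). So each
   point p of G lies in the orbit of (q(p), 0), hence E = q^-1(\<Lambda>) for \<Lambda> = {r. (r, 0) \<in> E},
   and \<Lambda> is closed because E is. *)

section \<open>The symmetrized bidisc\<close>

lemma sym_pair_unique:
  fixes a b c d :: "'a::idom"
  assumes "a + b = c + d" and "a * b = c * d"
  shows "(a = c \<and> b = d) \<or> (a = d \<and> b = c)"
proof -
  have "(a - c) * (a - d) = a * a - a * (c + d) + c * d"
    by (simp add: algebra_simps)
  also have "\<dots> = a * a - a * (a + b) + a * b"
    using assms by simp
  also have "\<dots> = 0"
    by (simp add: algebra_simps)
  finally have "a = c \<or> a = d"
    by simp
  then show ?thesis
    using assms(1) by auto
qed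

lemma pseudo_hyperbolic_dist_commute:
  fixes a b :: complex
  shows "norm ((b - a) / (1 - cnj b * a)) = norm ((a - b) / (1 - cnj a * b))"
proof -
  have "1 - cnj b * a = cnj (1 - cnj a * b)"
    by simp
  then have "norm (1 - cnj b * a) = norm (1 - cnj a * b)"
    by (simp only: complex_mod_cnj)
  then show ?thesis
    by (simp add: norm_divide norm_minus_commute)
qed

lemma qmap_sym_pair:
  assumes "z1 \<in> unit_disc" and "z2 \<in> unit_disc"
  shows "qmap (z1 + z2, z1 * z2) = norm ((z1 - z2) / (1 - cnj z1 * z2))"
  unfolding qmap_def
proof (rule some_equality)
  fix r
  assume "\<exists>a b. a \<in> unit_disc \<and> b \<in> unit_disc \<and> (z1 + z2, z1 * z2) = (a + b, a * b) \<and>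
    r = norm ((a - b) / (1 - cnj a * b))"
  then obtain a b where "z1 + z2 = a + b" "z1 * z2 = a * b" "r = norm ((a - b) / (1 - cnj a * b))"
    by auto
  then show "r = norm ((z1 - z2) / (1 - cnj z1 * z2))"
    using sym_pair_unique pseudo_hyperbolic_dist_commute by metis
qed (use assms in blast)

lemma Hmap_sym_pair:
  assumes "z1 \<in> unit_disc" and "z2 \<in> unit_disc"
  shows "Hmap \<phi> (z1 + z2, z1 * z2) = (\<phi> z1 + \<phi> z2, \<phi> z1 * \<phi> z2)"
  unfolding Hmap_def
proof (rule some_equality)
  fix w
  assume "\<exists>a b. a \<in> unit_disc \<and> b \<in> unit_disc \<and> (z1 + z2, z1 * z2) = (a + b, a * b) \<and>
    w = (\<phi> a + \<phi> b, \<phi> a * \<phi> b)"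
  then obtain a b where "z1 + z2 = a + b" "z1 * z2 = a * b" "w = (\<phi> a + \<phi> b, \<phi> a * \<phi> b)"
    by auto
  then show "w = (\<phi> z1 + \<phi> z2, \<phi> z1 * \<phi> z2)"
    using sym_pair_unique[of z1 z2 a b] by (auto simp: algebra_simps)
qed (use assms in blast)

lemma sym_pair_in_symbidisc:
  "z1 \<in> unit_disc \<Longrightarrow> z2 \<in> unit_disc \<Longrightarrow> (z1 + z2, z1 * z2) \<in> symbidisc"
  unfolding symbidisc_def by blast

lemma Hmap_in_symbidisc:
  assumes "\<phi> \<in> AutD" and "p \<in> symbidisc"
  shows "Hmap \<phi> p \<in> symbidisc"
proof -
  obtain z1 z2 where z: "z1 \<in> unit_disc" "z2 \<in> unit_disc" and p: "p = (z1 + z2, z1 * z2)"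
    using assms(2) unfolding symbidisc_def by blast
  have "\<phi> z1 \<in> unit_disc" "\<phi> z2 \<in> unit_disc"
    using assms(1) z by (auto simp: AutD_def bij_betw_def)
  then show ?thesis
    unfolding p Hmap_sym_pair[OF z] by (rule sym_pair_in_symbidisc)
qed

lemma qmap_in_unit_interval:
  assumes "p \<in> symbidisc"
  shows "qmap p \<in> {0..<1}"
proof -
  obtain z1 z2 where z: "z1 \<in> unit_disc" "z2 \<in> unit_disc" and p: "p = (z1 + z2, z1 * z2)"
    using assms unfolding symbidisc_def by blast
  have "qmap p = norm (Moebius_function 0 z1 z2)"
    by (simp add: p qmap_sym_pair[OF z] Moebius_function_simple norm_divide norm_minus_commute)
  moreover have "norm (Moebius_function 0 z1 z2) < 1"
    using z by (simp add: unit_disc_def Moebius_function_norm_lt_1)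
  ultimately show ?thesis
    by simp
qed

section \<open>Orbits of Aut(G)\<close>

lemma Moebius_function_in_AutD:
  assumes "norm a < 1"
  shows "Moebius_function t a \<in> AutD"
proof -
  have rot: "Moebius_function t a z = cis t * Moebius_function 0 a z" for z
    by (simp add: Moebius_function_def cis_conv_exp)
  have norm_cis: "norm (cis s * z) < 1" if "norm z < 1" for s z
    using that by (simp add: norm_mult)
  have "bij_betw (Moebius_function t a) unit_disc unit_disc"
  proof (rule bij_betw_byWitness[where f' = "\<lambda>w. Moebius_function 0 (- a) (cis (- t) * w)"])
    show "\<forall>z\<in>unit_disc. Moebius_function 0 (- a) (cis (- t) * Moebius_function t a z) = z"
      using assms by (auto simp: rot unit_disc_def cis_mult mult.assoc[symmetric]
          intro: Moebius_function_compose)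
    show "\<forall>w\<in>unit_disc. Moebius_function t a (Moebius_function 0 (- a) (cis (- t) * w)) = w"
      using assms norm_cis by (auto simp: rot unit_disc_def Moebius_function_compose
          cis_mult mult.assoc[symmetric])
    show "Moebius_function t a ` unit_disc \<subseteq> unit_disc"
      "(\<lambda>w. Moebius_function 0 (- a) (cis (- t) * w)) ` unit_disc \<subseteq> unit_disc"
      using assms norm_cis by (auto simp: unit_disc_def Moebius_function_norm_lt_1)
  qed
  then show ?thesis
    using Moebius_function_holomorphic[OF assms] by (simp add: AutD_def unit_disc_def)
qed

lemma AutD_inverse:
  assumes "\<phi> \<in> AutD"
  obtains \<psi> where "\<psi> \<in> AutD" and "\<And>z. z \<in> unit_disc \<Longrightarrow> \<psi> (\<phi> z) = z"
proof -
  have hol: "\<phi> holomorphic_on unit_disc" and bij: "bij_betw \<phi> unit_disc unit_disc"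
    using assms by (auto simp: AutD_def)
  obtain \<psi> where hol\<psi>: "\<psi> holomorphic_on \<phi> ` unit_disc" and inv: "\<And>z. z \<in> unit_disc \<Longrightarrow> \<psi> (\<phi> z) = z"
    using holomorphic_has_inverse[OF hol _ bij_betw_imp_inj_on[OF bij]]
    by (metis open_ball unit_disc_def)
  have onto: "\<phi> ` unit_disc = unit_disc"
    using bij by (simp add: bij_betw_def)
  have "bij_betw \<psi> unit_disc unit_disc"
  proof (rule bij_betw_byWitness[where f' = \<phi>])
    show "\<forall>w\<in>unit_disc. \<phi> (\<psi> w) = w"
      using onto inv by (metis imageE)
    have "\<psi> ` unit_disc = \<psi> ` \<phi> ` unit_disc"
      by (simp only: onto)
    also have "\<dots> = (\<lambda>z. \<psi> (\<phi> z)) ` unit_disc"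
      by (simp only: image_image)
    also have "\<dots> = unit_disc"
      using inv by simp
    finally show "\<psi> ` unit_disc \<subseteq> unit_disc"
      by simp
  qed (use onto inv in auto)
  with hol\<psi> bij have "\<psi> \<in> AutD"
    by (simp add: AutD_def bij_betw_def)
  with inv show thesis
    using that by blast
qed

lemma symbidisc_orbit_qmap:
  assumes "p \<in> symbidisc"
  obtains \<phi> \<psi> where "\<phi> \<in> AutD" "\<psi> \<in> AutD"
    "Hmap \<phi> p = (of_real (qmap p), 0)" "Hmap \<psi> (of_real (qmap p), 0) = p"
proof -
  obtain z1 z2 where z: "z1 \<in> unit_disc" "z2 \<in> unit_disc" and p: "p = (z1 + z2, z1 * z2)"
    using assms unfolding symbidisc_def by blast
  define u where "u = Moebius_function 0 z1 z2"
  have q: "qmap p = norm u"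
    by (simp add: p u_def qmap_sym_pair[OF z] Moebius_function_simple norm_divide norm_minus_commute)
  define \<phi> where "\<phi> = Moebius_function (- Arg u) z1"
  have \<phi>: "\<phi> \<in> AutD"
    using z by (simp add: \<phi>_def unit_disc_def Moebius_function_in_AutD)
  obtain \<psi> where \<psi>: "\<psi> \<in> AutD" "\<And>z. z \<in> unit_disc \<Longrightarrow> \<psi> (\<phi> z) = z"
    using AutD_inverse[OF \<phi>] by blast
  have "\<phi> z1 = 0"
    by (simp add: \<phi>_def Moebius_function_eq_zero)
  moreover have "\<phi> z2 = cis (- Arg u) * rcis (norm u) (Arg u)"
    by (simp add: \<phi>_def u_def Moebius_function_def cis_conv_exp rcis_cmod_Arg)
  then have "\<phi> z2 = of_real (qmap p)"
    by (simp add: q rcis_def cis_mult)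
  ultimately have \<phi>p: "(\<phi> z1 + \<phi> z2, \<phi> z1 * \<phi> z2) = (of_real (qmap p), 0)"
    by simp
  have "\<phi> z1 \<in> unit_disc" "\<phi> z2 \<in> unit_disc"
    using \<phi> z by (auto simp: AutD_def bij_betw_def)
  then have "Hmap \<psi> (of_real (qmap p), 0) = (\<psi> (\<phi> z1) + \<psi> (\<phi> z2), \<psi> (\<phi> z1) * \<psi> (\<phi> z2))"
    unfolding \<phi>p[symmetric] by (rule Hmap_sym_pair)
  then have "Hmap \<psi> (of_real (qmap p), 0) = p"
    by (simp add: \<psi>(2) z p)
  moreover have "Hmap \<phi> p = (of_real (qmap p), 0)"
    by (simp add: p Hmap_sym_pair[OF z] \<phi>p)
  ultimately show thesis
    using that \<phi> \<psi>(1) by blast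
qed

lemma Aut_invariant_subset_eq_qmap_vimage:
  assumes "E \<subseteq> symbidisc" and "\<And>\<phi> p. \<phi> \<in> AutD \<Longrightarrow> p \<in> E \<Longrightarrow> Hmap \<phi> p \<in> E"
  shows "E = {p \<in> symbidisc. qmap p \<in> {r \<in> {0..<1}. (complex_of_real r, 0) \<in> E}}"
proof -
  have orbit_equiv: "p \<in> E \<longleftrightarrow> (complex_of_real (qmap p), 0) \<in> E" if p: "p \<in> symbidisc" for p
  proof -
    obtain \<phi> \<psi> where \<phi>: "\<phi> \<in> AutD" "Hmap \<phi> p = (of_real (qmap p), 0)"
      and \<psi>: "\<psi> \<in> AutD" "Hmap \<psi> (of_real (qmap p), 0) = p"
      using symbidisc_orbit_qmap[OF p] .
    show ?thesis
    proof
      assume "p \<in> E"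
      then have "Hmap \<phi> p \<in> E"
        by (rule assms(2)[OF \<phi>(1)])
      then show "(complex_of_real (qmap p), 0) \<in> E"
        by (simp only: \<phi>(2))
    next
      assume "(complex_of_real (qmap p), 0) \<in> E"
      then have "Hmap \<psi> (of_real (qmap p), 0) \<in> E"
        by (rule assms(2)[OF \<psi>(1)])
      then show "p \<in> E"
        by (simp only: \<psi>(2))
    qed
  qed
  show ?thesis
  proof (rule set_eqI)
    fix p
    show "p \<in> E \<longleftrightarrow> p \<in> {p \<in> symbidisc. qmap p \<in> {r \<in> {0..<1}. (complex_of_real r, 0) \<in> E}}"
    proof (cases "p \<in> symbidisc")
      case True
      then show ?thesis
        using orbit_equiv[OF True] qmap_in_unit_interval[OF True] by simp
    qed (use assms(1) in auto)
  qed
qed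

lemma closedin_real_slice_symbidisc:
  assumes "closedin (top_of_set symbidisc) E"
  shows "closedin (top_of_set {0..<1::real}) {r \<in> {0..<1}. (complex_of_real r, 0) \<in> E}"
proof -
  have "(complex_of_real r, 0) \<in> symbidisc" if "r \<in> {0..<1}" for r
    using sym_pair_in_symbidisc[of "of_real r" 0] that by (simp add: unit_disc_def)
  then have "closedin (top_of_set {0..<1}) ({0..<1} \<inter> (\<lambda>r. (complex_of_real r, 0)) -` E)"
    by (intro continuous_closedin_preimage_gen[OF _ _ assms] continuous_intros) auto
  moreover have "{0..<1} \<inter> (\<lambda>r. (complex_of_real r, 0)) -` E = {r \<in> {0..<1}. (complex_of_real r, 0) \<in> E}"
    by auto
  ultimately show ?thesis
    by simp
qed

section \<open>Closed ideals of C_0(G) and their hulls\<close>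

lemma compact_finite_nonvanishing_subfamily:
  fixes F :: "('a::topological_space \<Rightarrow> 'b::{t1_space, zero}) set"
  assumes "compact K" and "\<And>g. g \<in> F \<Longrightarrow> continuous_on K g" and "\<forall>p\<in>K. \<exists>g\<in>F. g p \<noteq> 0"
  obtains X where "finite X" "X \<subseteq> F" "\<forall>p\<in>K. \<exists>g\<in>X. g p \<noteq> 0"
proof -
  define U where "U g = K \<inter> g -` (- {0})" for g :: "'a \<Rightarrow> 'b"
  have "\<forall>V\<in>U ` F. openin (top_of_set K) V"
    using assms(2) by (auto simp: U_def intro: continuous_openin_preimage_gen)
  moreover have "K \<subseteq> \<Union> (U ` F)"
    using assms(3) by (auto simp: U_def)
  ultimately obtain D where "D \<subseteq> U ` F" "finite D" "K \<subseteq> \<Union> D"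
    using assms(1) unfolding compact_eq_openin_cover by meson
  then obtain X where X: "X \<subseteq> F" "finite X" "K \<subseteq> \<Union> (U ` X)"
    using finite_subset_image by metis
  then have "\<forall>p\<in>K. \<exists>g\<in>X. g p \<noteq> 0"
    unfolding U_def by blast
  with X show thesis
    using that by blast
qed

lemma compact_continuous_pos_bounded_below:
  fixes h :: "'a::topological_space \<Rightarrow> real"
  assumes "compact K" and "continuous_on K h" and "\<And>p. p \<in> K \<Longrightarrow> 0 < h p"
  obtains m where "0 < m" "\<And>p. p \<in> K \<Longrightarrow> m \<le> h p"
proof (cases "K = {}")
  case False
  then obtain p0 where "p0 \<in> K" "\<forall>p\<in>K. h p0 \<le> h p"
    using continuous_attains_inf[OF assms(1) False assms(2)] by blast
  then show thesis
    using that assms(3) by blast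
qed (use that[of 1] in simp)

lemma norm_diff_divide_mult:
  fixes x :: complex
  assumes "0 < \<delta>" and "0 \<le> h"
  shows "norm (x - x / complex_of_real (\<delta> + h) * complex_of_real h) = norm x * (\<delta> / (\<delta> + h))"
proof -
  have cancel: "x - x / d * y = x * ((d - y) / d)" if "d \<noteq> 0" for d y :: complex
    using that by (simp add: field_simps)
  have "complex_of_real (\<delta> + h) \<noteq> 0"
    using assms by (simp only: of_real_eq_0_iff)
  from cancel[OF this, of "of_real h"]
  have "x - x / complex_of_real (\<delta> + h) * complex_of_real h = x * complex_of_real (\<delta> / (\<delta> + h))"
    by simp
  then show ?thesis
    using assms by (simp only: norm_mult norm_of_real abs_of_pos divide_pos_pos add_pos_nonneg)
qed

lemma C0G_dominated:
  assumes f: "f \<in> C0G" and h: "continuous_on symbidisc h" "\<And>p. p \<notin> symbidisc \<Longrightarrow> h p = 0"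
    and c: "c > 0" and dom: "\<And>p. p \<in> symbidisc \<Longrightarrow> norm (h p) \<le> c * norm (f p)"
  shows "h \<in> C0G"
proof -
  have "compact {p \<in> symbidisc. \<epsilon> \<le> norm (h p)}" if "\<epsilon> > 0" for \<epsilon>
  proof -
    define S where "S = {p \<in> symbidisc. \<epsilon> / c \<le> norm (f p)}"
    have "compact S"
      using f that c by (simp add: C0G_def S_def)
    moreover have "continuous_on S (\<lambda>p. norm (h p))"
      by (intro continuous_on_norm continuous_on_subset[OF h(1)]) (auto simp: S_def)
    then have "closedin (top_of_set S) (S \<inter> (\<lambda>p. norm (h p)) -` {\<epsilon>..})"
      by (rule continuous_closedin_preimage) simp
    moreover have "{p \<in> symbidisc. \<epsilon> \<le> norm (h p)} = S \<inter> (\<lambda>p. norm (h p)) -` {\<epsilon>..}"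
    proof safe
      fix p
      assume p: "p \<in> symbidisc" "\<epsilon> \<le> norm (h p)"
      then have "\<epsilon> \<le> c * norm (f p)"
        using dom[OF p(1)] by linarith
      with p c show "p \<in> S"
        by (simp add: S_def divide_le_eq mult.commute)
    qed (auto simp: S_def)
    ultimately show ?thesis
      using closedin_compact by metis
  qed
  with h show ?thesis
    by (simp add: C0G_def)
qed

lemma C0G_cnj: "f \<in> C0G \<Longrightarrow> (\<lambda>p. cnj (f p)) \<in> C0G"
  by (rule C0G_dominated[where c = 1]) (auto simp: C0G_def intro: continuous_on_cnj)

lemma C0G_divide_pos:
  assumes f: "f \<in> C0G" and h: "continuous_on symbidisc h" "\<And>p. 0 \<le> h p" and \<delta>: "0 < \<delta>"
  shows "(\<lambda>p. f p / complex_of_real (\<delta> + h p)) \<in> C0G"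
proof (rule C0G_dominated[OF f, where c = "1 / \<delta>"])
  have den: "0 < \<delta> + h p" for p
    using \<delta> h(2)[of p] by linarith
  then have "complex_of_real (\<delta> + h p) \<noteq> 0" for p
    by (simp only: of_real_eq_0_iff) (metis less_irrefl)
  with f h(1) show "continuous_on symbidisc (\<lambda>p. f p / complex_of_real (\<delta> + h p))"
    by (intro continuous_intros) (auto simp: C0G_def)
  show "norm (f p / complex_of_real (\<delta> + h p)) \<le> 1 / \<delta> * norm (f p)" for p
  proof -
    have "norm (f p / complex_of_real (\<delta> + h p)) = norm (f p) / (\<delta> + h p)"
      using den[of p] by (simp only: norm_divide norm_of_real abs_of_pos)
    also have "\<dots> \<le> norm (f p) / \<delta>"
      using \<delta> h(2)[of p] by (intro divide_left_mono) auto
    finally show ?thesis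
      by simp
  qed
  show "f p / complex_of_real (\<delta> + h p) = 0" if "p \<notin> symbidisc" for p
  proof -
    have "f p = 0"
      using f that unfolding C0G_def mem_Collect_eq by blast
    then show ?thesis
      by simp
  qed
qed (use \<delta> in simp)

lemma ideal_C0G_sum:
  assumes I: "is_ideal_C0G I" and "finite X" and "\<And>x. x \<in> X \<Longrightarrow> g x \<in> I"
  shows "(\<lambda>p. \<Sum>x\<in>X. g x p) \<in> I"
  using assms(2,3)
proof (induction X rule: finite_induct)
  case empty
  then show ?case
    using I by (simp add: is_ideal_C0G_def)
next
  case (insert x X)
  have "\<And>f g. f \<in> I \<Longrightarrow> g \<in> I \<Longrightarrow> (\<lambda>p. f p + g p) \<in> I"
    using I by (simp add: is_ideal_C0G_def)
  then have "(\<lambda>p. g x p + (\<Sum>x\<in>X. g x p)) \<in> I"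
    using insert by simp
  with insert show ?case
    by simp
qed

lemma ideal_C0G_real_positive_on_compact:
  assumes I: "is_ideal_C0G I" and K: "compact K" "K \<subseteq> symbidisc"
    and nonzero: "\<forall>p\<in>K. \<exists>g\<in>I. g p \<noteq> 0"
  obtains h where "(\<lambda>p. complex_of_real (h p)) \<in> I" "continuous_on symbidisc h"
    "\<And>p. 0 \<le> h p" "\<And>p. p \<in> K \<Longrightarrow> 0 < h p"
proof -
  have C0G: "I \<subseteq> C0G" and mult: "\<And>f k. f \<in> I \<Longrightarrow> k \<in> C0G \<Longrightarrow> (\<lambda>p. k p * f p) \<in> I"
    using I by (auto simp: is_ideal_C0G_def)
  then have cont: "\<And>g. g \<in> I \<Longrightarrow> continuous_on symbidisc g"
    by (auto simp: C0G_def)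
  obtain X where X: "finite X" "X \<subseteq> I" "\<forall>p\<in>K. \<exists>g\<in>X. g p \<noteq> 0"
    using compact_finite_nonvanishing_subfamily[OF K(1) _ nonzero] cont continuous_on_subset K(2)
    by metis
  define h where "h p = (\<Sum>g\<in>X. (norm (g p))\<^sup>2)" for p
  have sum_in_I: "(\<lambda>p. \<Sum>g\<in>X. cnj (g p) * g p) \<in> I"
    using X(2) C0G by (intro ideal_C0G_sum[OF I X(1)] mult C0G_cnj) auto
  have sum_eq: "(\<lambda>p. \<Sum>g\<in>X. cnj (g p) * g p) = (\<lambda>p. complex_of_real (h p))"
    unfolding h_def of_real_sum complex_norm_square by (simp add: mult.commute)
  show thesis
  proof (rule that)
    show "(\<lambda>p. complex_of_real (h p)) \<in> I"
      using sum_in_I sum_eq by simp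
    show "0 \<le> h p" for p
      by (simp add: h_def sum_nonneg)
  next
    have "continuous_on symbidisc (\<lambda>p. (norm (g p))\<^sup>2)" if "g \<in> X" for g
      using cont X(2) that by (intro continuous_on_power continuous_on_norm) blast
    then show "continuous_on symbidisc h"
      unfolding h_def[abs_def] by (rule continuous_on_sum)
  next
    fix p
    assume "p \<in> K"
    then obtain g where "g \<in> X" "g p \<noteq> 0"
      using X(3) by blast
    then show "0 < h p"
      unfolding h_def using X(1) by (intro sum_pos2[where i = g]) auto
  qed
qed

definition ideal_hull :: "(complex \<times> complex \<Rightarrow> complex) set \<Rightarrow> (complex \<times> complex) set" where
  "ideal_hull I = {p \<in> symbidisc. \<forall>f\<in>I. f p = 0}"

lemma ideal_C0G_approx_vanishing_on_hull:
  assumes I: "is_ideal_C0G I" and f: "f \<in> C0G" and vanish: "\<And>p. p \<in> ideal_hull I \<Longrightarrow> f p = 0"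
    and \<epsilon>: "\<epsilon> > 0"
  shows "\<exists>g\<in>I. \<forall>p\<in>symbidisc. norm (f p - g p) \<le> \<epsilon>"
proof -
  define K where "K = {p \<in> symbidisc. \<epsilon> \<le> norm (f p)}"
  have K: "compact K" "K \<subseteq> symbidisc"
    using f \<epsilon> by (auto simp: C0G_def K_def)
  have "\<forall>p\<in>K. \<exists>g\<in>I. g p \<noteq> 0"
    using vanish \<epsilon> by (force simp: K_def ideal_hull_def)
  then obtain h where h: "(\<lambda>p. complex_of_real (h p)) \<in> I" "continuous_on symbidisc h"
    "\<And>p. 0 \<le> h p" "\<And>p. p \<in> K \<Longrightarrow> 0 < h p"
    using ideal_C0G_real_positive_on_compact[OF I K] by blast
  obtain m where m: "0 < m" "\<And>p. p \<in> K \<Longrightarrow> m \<le> h p"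
    using compact_continuous_pos_bounded_below[OF K(1) continuous_on_subset[OF h(2) K(2)] h(4)]
    by blast
  have "continuous_on K f"
    using f K(2) by (auto simp: C0G_def intro: continuous_on_subset)
  then have "bounded (f ` K)"
    using K(1) by (intro compact_imp_bounded compact_continuous_image)
  then obtain B where "0 < B" "\<forall>y\<in>f ` K. norm y \<le> B"
    by (auto simp: bounded_pos)
  then have B: "0 < B" "\<And>p. p \<in> K \<Longrightarrow> norm (f p) \<le> B"
    by auto
  define \<delta> where "\<delta> = \<epsilon> * m / B"
  have \<delta>: "0 < \<delta>"
    using \<epsilon> m B by (simp add: \<delta>_def)
  define k where "k p = f p / complex_of_real (\<delta> + h p)" for p
  have "k \<in> C0G"
    unfolding k_def[abs_def] using f h(2,3) \<delta> by (rule C0G_divide_pos)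
  then have "(\<lambda>p. k p * complex_of_real (h p)) \<in> I"
    using I h(1) by (simp add: is_ideal_C0G_def)
  moreover have "norm (f p - k p * complex_of_real (h p)) \<le> \<epsilon>" if p: "p \<in> symbidisc" for p
  proof -
    have diff: "norm (f p - k p * complex_of_real (h p)) = norm (f p) * (\<delta> / (\<delta> + h p))"
      unfolding k_def by (rule norm_diff_divide_mult[OF \<delta> h(3)])
    show ?thesis
    proof (cases "p \<in> K")
      case True
      have "\<delta> / (\<delta> + h p) \<le> \<delta> / m"
        using m(2)[OF True] m(1) \<delta> by (intro divide_left_mono) auto
      then have "norm (f p) * (\<delta> / (\<delta> + h p)) \<le> B * (\<delta> / m)"
        using B True \<delta> h(3)[of p] by (intro mult_mono) auto
      also have "\<dots> = \<epsilon>"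
        using B(1) m(1) by (simp add: \<delta>_def)
      finally show ?thesis
        using diff by simp
    next
      case False
      then have "norm (f p) \<le> \<epsilon>"
        using p by (simp add: K_def)
      moreover have "\<delta> / (\<delta> + h p) \<le> 1"
        using \<delta> h(3)[of p] by simp
      ultimately have "norm (f p) * (\<delta> / (\<delta> + h p)) \<le> \<epsilon> * 1"
        using \<epsilon> \<delta> h(3)[of p] by (intro mult_mono) auto
      then show ?thesis
        using diff by simp
    qed
  qed
  ultimately show ?thesis
    by (intro bexI[of _ "\<lambda>p. k p * complex_of_real (h p)"]) auto
qed

lemma closed_ideal_C0G_eq_ideal_of_hull:
  assumes "is_ideal_C0G I" and "closed_C0G I"
  shows "I = ideal_of (ideal_hull I)"
proof
  show "I \<subseteq> ideal_of (ideal_hull I)"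
    using assms(1) by (auto simp: is_ideal_C0G_def ideal_of_def ideal_hull_def)
  show "ideal_of (ideal_hull I) \<subseteq> I"
  proof
    fix f
    assume "f \<in> ideal_of (ideal_hull I)"
    then have "f \<in> C0G" and "\<And>p. p \<in> ideal_hull I \<Longrightarrow> f p = 0"
      by (auto simp: ideal_of_def)
    then show "f \<in> I"
      using assms ideal_C0G_approx_vanishing_on_hull unfolding closed_C0G_def by blast
  qed
qed

lemma closedin_ideal_hull:
  assumes "I \<subseteq> C0G"
  shows "closedin (top_of_set symbidisc) (ideal_hull I)"
proof -
  have "closedin (top_of_set symbidisc) {p \<in> symbidisc. f p = 0}" if "f \<in> I" for f
    using that assms by (intro continuous_closedin_preimage_constant) (auto simp: C0G_def)
  then have "closedin (top_of_set symbidisc) (\<Inter> (insert symbidisc ((\<lambda>f. {p \<in> symbidisc. f p = 0}) ` I)))"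
    by (intro closedin_Inter) auto
  moreover have "\<Inter> (insert symbidisc ((\<lambda>f. {p \<in> symbidisc. f p = 0}) ` I)) = ideal_hull I"
    by (auto simp: ideal_hull_def)
  ultimately show ?thesis
    by simp
qed

lemma ideal_hull_Hmap:
  assumes "aut_invariant I" and "\<phi> \<in> AutD" and "p \<in> ideal_hull I"
  shows "Hmap \<phi> p \<in> ideal_hull I"
proof -
  have "f (Hmap \<phi> p) = 0" if "f \<in> I" for f
  proof -
    have "(\<lambda>p. if p \<in> symbidisc then f (Hmap \<phi> p) else 0) \<in> I"
      using assms(1,2) that by (simp add: aut_invariant_def)
    then show ?thesis
      using assms(3) by (auto simp: ideal_hull_def)
  qed
  moreover have "Hmap \<phi> p \<in> symbidisc"
    using assms(2,3) by (simp add: ideal_hull_def Hmap_in_symbidisc)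
  ultimately show ?thesis
    by (simp add: ideal_hull_def)
qed

theorem theorem4p1:
  assumes "is_ideal_C0G I" and "closed_C0G I" and "aut_invariant I"
  shows "\<exists>\<Lambda>. closedin (top_of_set {0..<1::real}) \<Lambda> \<and>
           I = ideal_of {p \<in> symbidisc. qmap p \<in> \<Lambda>}"
proof -
  define E where "E = ideal_hull I"
  define \<Lambda> where "\<Lambda> = {r \<in> {0..<1::real}. (complex_of_real r, 0) \<in> E}"
  have "I = ideal_of E"
    unfolding E_def using assms(1,2) by (rule closed_ideal_C0G_eq_ideal_of_hull)
  moreover have "E = {p \<in> symbidisc. qmap p \<in> \<Lambda>}"
    unfolding \<Lambda>_def E_def
    by (rule Aut_invariant_subset_eq_qmap_vimage[OF _ ideal_hull_Hmap[OF assms(3)]])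
      (auto simp: ideal_hull_def)
  moreover have "closedin (top_of_set {0..<1::real}) \<Lambda>"
    unfolding \<Lambda>_def E_def
    using assms(1) by (intro closedin_real_slice_symbidisc closedin_ideal_hull) (simp add: is_ideal_C0G_def)
  ultimately show ?thesis
    by auto
qed

end
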